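(* Let $\mathcal{C}$ be a symmetric monoidal category with completely mixed states $\mu$. Specifying a dagger compact structure on $\mathcal{C}$ compatible with $\mu$ (i.e. a dagger making $\mathcal{C}$ dagger compact such that, setting $\top_A:=\mu_A^\dagger$, $\top$ is a discarding and every object has a dagger dual satisfying the discarding-compatibility equations below) is equivalent, via $\overline{\psi}=\psi^\dagger$ on states, to specifying a state dagger on $\mathcal{C}$ such that every object has a state dagger dual satisfying the discarding-compatibility equations, where $\top_A:=\overline{\mu_A}$.
   Context: Notation: $\mathcal{C}$ is a symmetric monoidal category with tensor $\otimes$, unit $I$, coherence isomorphisms (associators, unitors $\lambda,\rho$, symmetries $\sigma_{A,B}\colon A\otimes B\to B\otimes A$); unitors are suppressed. States are morphisms $I\to A$, effects are morphisms $A\to I$. Discarding: a family of effects $\top_A\colon A\to I$ with $\top_{A\otimes B}=\top_A\otimes\top_B$ and $\top_I=1_I$. Completely mixed states: a family of states $\mu_A\colon I\to A$ with $\mu_{A\otimes B}=\mu_A\otimes\mu_B$ and $\mu_I=1_I$ (not necessarily normalised). A dual of $A$ is $(A^*,\eta_A\colon I\to A^*\otimes A,\ \epsilon_A\colon A\otimes A^*\to I)$ satisfying the snake equations $(\epsilon_A\otimes 1_A)\circ(1_A\otimes\eta_A)=1_A$, $(1_{A^*}\otimes\epsilon_A)\circ(\eta_A\otimes 1_{A^*})=1_{A^*}$. Discarding-compatibility equations for a dual: $(\top_{A^*}\otimes 1_A)\circ\eta_A=\mu_A$ and $(1_{A^*}\otimes\top_A)\circ\eta_A=\mu_{A^*}$.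 Dagger compact: an identity-on-objects involutive contravariant functor $(-)^\dagger$ with $(f\otimes g)^\dagger=f^\dagger\otimes g^\dagger$, all coherence isomorphisms unitary, and every object having a dual with $\epsilon_A=(\sigma_{A^*,A}\circ\eta_A)^\dagger$ (a dagger dual). A state dagger assigns to each state $\psi$ of $A$ an effect $\overline{\psi}$ on $A$ with: $\overline{1_I}=1_I$; $\overline{\psi\otimes\phi}=\overline{\psi}\otimes\overline{\phi}$; for every state $\psi$ of $A\otimes B$ and state $\phi$ of $A$, $\overline{(\overline{\phi}\otimes 1_B)\circ\psi}=\overline{\psi}\circ(\phi\otimes 1_B)$; and for every state $\psi$ of $A$ and coherence isomorphism $\gamma\colon A\to A'$, $\overline{\gamma\circ\psi}=\overline{\psi}\circ\gamma^{-1}$. A state dagger dual is a dual with $\epsilon_A=\overline{\sigma_{A^*,A}\circ\eta_A}$. *)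

theory Defs
  imports Main
begin

text \<open>Morphisms are elements of a
type 'm, objects of a type 'o; Hom C A B is the hom-set; Cmp C g f is "g after f";
hom-sets are required to be pairwise disjoint so every morphism has a unique (co)domain.
Unitors are kept explicit (the paper suppresses them; we insert them where types demand).\<close>

record ('o, 'm) smc_data =
  Hom  :: "'o \<Rightarrow> 'o \<Rightarrow> 'm set"
  Cmp  :: "'m \<Rightarrow> 'm \<Rightarrow> 'm"
  Id   :: "'o \<Rightarrow> 'm"
  Ten  :: "'o \<Rightarrow> 'o \<Rightarrow> 'o"
  TenA :: "'m \<Rightarrow> 'm \<Rightarrow> 'm"
  Unit :: "'o"
  Asc  :: "'o \<Rightarrow> 'o \<Rightarrow> 'o \<Rightarrow> 'm"
  Lu   :: "'o \<Rightarrow> 'm"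
  Ru   :: "'o \<Rightarrow> 'm"
  Sy   :: "'o \<Rightarrow> 'o \<Rightarrow> 'm"

definition category :: "('o, 'm) smc_data \<Rightarrow> bool" where
  "category C \<longleftrightarrow>
     (\<forall>A. Id C A \<in> Hom C A A) \<and>
     (\<forall>A B D f g. f \<in> Hom C A B \<longrightarrow> g \<in> Hom C B D \<longrightarrow> Cmp C g f \<in> Hom C A D) \<and>
     (\<forall>A B D E f g h. f \<in> Hom C A B \<longrightarrow> g \<in> Hom C B D \<longrightarrow> h \<in> Hom C D E \<longrightarrow>
        Cmp C h (Cmp C g f) = Cmp C (Cmp C h g) f) \<and>
     (\<forall>A B f. f \<in> Hom C A B \<longrightarrow> Cmp C (Id C B) f = f \<and> Cmp C f (Id C A) = f) \<and>
     (\<forall>A B A' B' f. f \<in> Hom C A B \<longrightarrow> f \<in> Hom C A' B' \<longrightarrow> A = A' \<and> B = B')"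

definition is_iso :: "('o, 'm) smc_data \<Rightarrow> 'm \<Rightarrow> 'o \<Rightarrow> 'o \<Rightarrow> bool" where
  "is_iso C f A B \<longleftrightarrow> f \<in> Hom C A B \<and>
     (\<exists>g \<in> Hom C B A. Cmp C g f = Id C A \<and> Cmp C f g = Id C B)"

definition cinv :: "('o, 'm) smc_data \<Rightarrow> 'm \<Rightarrow> 'm" where
  "cinv C f = (SOME g. \<exists>A B. f \<in> Hom C A B \<and> g \<in> Hom C B A \<and>
                          Cmp C g f = Id C A \<and> Cmp C f g = Id C B)"

definition monoidal :: "('o, 'm) smc_data \<Rightarrow> bool" where
  "monoidal C \<longleftrightarrow> category C \<and>
     (\<forall>A B D E f g. f \<in> Hom C A B \<longrightarrow> g \<in> Hom C D E \<longrightarrow>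
        TenA C f g \<in> Hom C (Ten C A D) (Ten C B E)) \<and>
     (\<forall>A B. TenA C (Id C A) (Id C B) = Id C (Ten C A B)) \<and>
     (\<forall>A B D A' B' D' f g f' g'. f \<in> Hom C A B \<longrightarrow> g \<in> Hom C B D \<longrightarrow>
        f' \<in> Hom C A' B' \<longrightarrow> g' \<in> Hom C B' D' \<longrightarrow>
        TenA C (Cmp C g f) (Cmp C g' f') = Cmp C (TenA C g g') (TenA C f f')) \<and>
     (\<forall>A B D. is_iso C (Asc C A B D) (Ten C (Ten C A B) D) (Ten C A (Ten C B D))) \<and>
     (\<forall>A. is_iso C (Lu C A) (Ten C (Unit C) A) A) \<and>
     (\<forall>A. is_iso C (Ru C A) (Ten C A (Unit C)) A) \<and>
     (\<forall>A A' B B' D D' f g h. f \<in> Hom C A A' \<longrightarrow> g \<in> Hom C B B' \<longrightarrow> h \<in> Hom C D D' \<longrightarrow>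
        Cmp C (Asc C A' B' D') (TenA C (TenA C f g) h) =
        Cmp C (TenA C f (TenA C g h)) (Asc C A B D)) \<and>
     (\<forall>A A' f. f \<in> Hom C A A' \<longrightarrow>
        Cmp C (Lu C A') (TenA C (Id C (Unit C)) f) = Cmp C f (Lu C A)) \<and>
     (\<forall>A A' f. f \<in> Hom C A A' \<longrightarrow>
        Cmp C (Ru C A') (TenA C f (Id C (Unit C))) = Cmp C f (Ru C A)) \<and>
     (\<forall>A B D E.
        Cmp C (Asc C A B (Ten C D E)) (Asc C (Ten C A B) D E) =
        Cmp C (TenA C (Id C A) (Asc C B D E))
          (Cmp C (Asc C A (Ten C B D) E) (TenA C (Asc C A B D) (Id C E)))) \<and>
     (\<forall>A B. Cmp C (TenA C (Id C A) (Lu C B)) (Asc C A (Unit C) B) =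
        TenA C (Ru C A) (Id C B))"

definition symmetric_monoidal :: "('o, 'm) smc_data \<Rightarrow> bool" where
  "symmetric_monoidal C \<longleftrightarrow> monoidal C \<and>
     (\<forall>A B. Sy C A B \<in> Hom C (Ten C A B) (Ten C B A)) \<and>
     (\<forall>A A' B B' f g. f \<in> Hom C A A' \<longrightarrow> g \<in> Hom C B B' \<longrightarrow>
        Cmp C (Sy C A' B') (TenA C f g) = Cmp C (TenA C g f) (Sy C A B)) \<and>
     (\<forall>A B. Cmp C (Sy C B A) (Sy C A B) = Id C (Ten C A B)) \<and>
     (\<forall>A B D.
        Cmp C (Asc C B D A) (Cmp C (Sy C A (Ten C B D)) (Asc C A B D)) =
        Cmp C (TenA C (Id C B) (Sy C A D))
          (Cmp C (Asc C B A D) (TenA C (Sy C A B) (Id C D))))"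

inductive_set coh :: "('o, 'm) smc_data \<Rightarrow> 'm set" for C where
  coh_id:   "Id C A \<in> coh C"
| coh_asc:  "Asc C A B D \<in> coh C"
| coh_asci: "cinv C (Asc C A B D) \<in> coh C"
| coh_lu:   "Lu C A \<in> coh C"
| coh_lui:  "cinv C (Lu C A) \<in> coh C"
| coh_ru:   "Ru C A \<in> coh C"
| coh_rui:  "cinv C (Ru C A) \<in> coh C"
| coh_sy:   "Sy C A B \<in> coh C"
| coh_cmp:  "\<lbrakk>f \<in> coh C; g \<in> coh C; f \<in> Hom C A B; g \<in> Hom C B D\<rbrakk> \<Longrightarrow> Cmp C g f \<in> coh C"
| coh_ten:  "\<lbrakk>f \<in> coh C; g \<in> coh C\<rbrakk> \<Longrightarrow> TenA C f g \<in> coh C"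

definition mixed_states :: "('o, 'm) smc_data \<Rightarrow> ('o \<Rightarrow> 'm) \<Rightarrow> bool" where
  "mixed_states C mu \<longleftrightarrow>
     (\<forall>A. mu A \<in> Hom C (Unit C) A) \<and>
     (\<forall>A B. mu (Ten C A B) = Cmp C (TenA C (mu A) (mu B)) (cinv C (Lu C (Unit C)))) \<and>
     mu (Unit C) = Id C (Unit C)"

definition discarding :: "('o, 'm) smc_data \<Rightarrow> ('o \<Rightarrow> 'm) \<Rightarrow> bool" where
  "discarding C T \<longleftrightarrow>
     (\<forall>A. T A \<in> Hom C A (Unit C)) \<and>
     (\<forall>A B. T (Ten C A B) = Cmp C (Lu C (Unit C)) (TenA C (T A) (T B))) \<and>
     T (Unit C) = Id C (Unit C)"

definition is_dual :: "('o, 'm) smc_data \<Rightarrow> 'o \<Rightarrow> 'o \<Rightarrow> 'm \<Rightarrow> 'm \<Rightarrow> bool" where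
  "is_dual C A As eta eps \<longleftrightarrow>
     eta \<in> Hom C (Unit C) (Ten C As A) \<and>
     eps \<in> Hom C (Ten C A As) (Unit C) \<and>
     Cmp C (Lu C A) (Cmp C (TenA C eps (Id C A)) (Cmp C (cinv C (Asc C A As A))
        (Cmp C (TenA C (Id C A) eta) (cinv C (Ru C A))))) = Id C A \<and>
     Cmp C (Ru C As) (Cmp C (TenA C (Id C As) eps) (Cmp C (Asc C As A As)
        (Cmp C (TenA C eta (Id C As)) (cinv C (Lu C As))))) = Id C As"

definition disc_compat :: "('o, 'm) smc_data \<Rightarrow> ('o \<Rightarrow> 'm) \<Rightarrow> ('o \<Rightarrow> 'm) \<Rightarrow> 'o \<Rightarrow> 'o \<Rightarrow> 'm \<Rightarrow> bool" where
  "disc_compat C T mu A As eta \<longleftrightarrow>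
     Cmp C (Lu C A) (Cmp C (TenA C (T As) (Id C A)) eta) = mu A \<and>
     Cmp C (Ru C As) (Cmp C (TenA C (Id C As) (T A)) eta) = mu As"

definition is_dagger :: "('o, 'm) smc_data \<Rightarrow> ('m \<Rightarrow> 'm) \<Rightarrow> bool" where
  "is_dagger C d \<longleftrightarrow>
     (\<forall>A B f. f \<in> Hom C A B \<longrightarrow> d f \<in> Hom C B A \<and> d (d f) = f) \<and>
     (\<forall>A. d (Id C A) = Id C A) \<and>
     (\<forall>A B D f g. f \<in> Hom C A B \<longrightarrow> g \<in> Hom C B D \<longrightarrow> d (Cmp C g f) = Cmp C (d f) (d g)) \<and>
     (\<forall>A B D E f g. f \<in> Hom C A B \<longrightarrow> g \<in> Hom C D E \<longrightarrow> d (TenA C f g) = TenA C (d f) (d g)) \<and>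
     (\<forall>\<gamma> \<in> coh C. d \<gamma> = cinv C \<gamma>)"

definition dagger_compact :: "('o, 'm) smc_data \<Rightarrow> ('m \<Rightarrow> 'm) \<Rightarrow> bool" where
  "dagger_compact C d \<longleftrightarrow> is_dagger C d \<and>
     (\<forall>A. \<exists>As eta eps. is_dual C A As eta eps \<and> eps = d (Cmp C (Sy C As A) eta))"

definition compat_dagger :: "('o, 'm) smc_data \<Rightarrow> ('o \<Rightarrow> 'm) \<Rightarrow> ('m \<Rightarrow> 'm) \<Rightarrow> bool" where
  "compat_dagger C mu d \<longleftrightarrow> dagger_compact C d \<and>
     discarding C (\<lambda>A. d (mu A)) \<and>
     (\<forall>A. \<exists>As eta eps. is_dual C A As eta eps \<and> eps = d (Cmp C (Sy C As A) eta) \<and>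
        disc_compat C (\<lambda>B. d (mu B)) mu A As eta)"

text \<open>State dagger (only its values on states matter); unitors inserted where needed.\<close>
definition state_dagger :: "('o, 'm) smc_data \<Rightarrow> ('m \<Rightarrow> 'm) \<Rightarrow> bool" where
  "state_dagger C s \<longleftrightarrow>
     (\<forall>A \<psi>. \<psi> \<in> Hom C (Unit C) A \<longrightarrow> s \<psi> \<in> Hom C A (Unit C)) \<and>
     s (Id C (Unit C)) = Id C (Unit C) \<and>
     (\<forall>A B \<psi> \<phi>. \<psi> \<in> Hom C (Unit C) A \<longrightarrow> \<phi> \<in> Hom C (Unit C) B \<longrightarrow>
        s (Cmp C (TenA C \<psi> \<phi>) (cinv C (Lu C (Unit C)))) =
        Cmp C (Lu C (Unit C)) (TenA C (s \<psi>) (s \<phi>))) \<and>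
     (\<forall>A B \<psi> \<phi>. \<psi> \<in> Hom C (Unit C) (Ten C A B) \<longrightarrow> \<phi> \<in> Hom C (Unit C) A \<longrightarrow>
        s (Cmp C (Lu C B) (Cmp C (TenA C (s \<phi>) (Id C B)) \<psi>)) =
        Cmp C (s \<psi>) (Cmp C (TenA C \<phi> (Id C B)) (cinv C (Lu C B)))) \<and>
     (\<forall>A A' \<psi> \<gamma>. \<psi> \<in> Hom C (Unit C) A \<longrightarrow> \<gamma> \<in> coh C \<longrightarrow> \<gamma> \<in> Hom C A A' \<longrightarrow>
        s (Cmp C \<gamma> \<psi>) = Cmp C (s \<psi>) (cinv C \<gamma>))"

definition compat_state_dagger :: "('o, 'm) smc_data \<Rightarrow> ('o \<Rightarrow> 'm) \<Rightarrow> ('m \<Rightarrow> 'm) \<Rightarrow> bool" where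
  "compat_state_dagger C mu s \<longleftrightarrow> state_dagger C s \<and>
     (\<forall>A. \<exists>As eta eps. is_dual C A As eta eps \<and> eps = s (Cmp C (Sy C As A) eta) \<and>
        disc_compat C (\<lambda>B. s (mu B)) mu A As eta)"

end

theory Submission
  imports Defs
begin

text \<open>
Given a state dagger s, call g an adjoint of f : A \<rightarrow> B if
s ((f \<otimes> 1_X) \<circ> \<psi>) = s \<psi> \<circ> (g \<otimes> 1_X) for every object X and every state \<psi> of A \<otimes> X.
Adjoints are closed under composition and tensor, and they exist for coherence
isomorphisms, for states \<phi> (namely s \<phi>) and for effects s \<phi> (namely \<phi>), by the three
axioms of a state dagger. The snake equation writes any f : A \<rightarrow> B as
\<lambda> \<circ> (\<epsilon> \<otimes> 1) \<circ> \<alpha>\<inverse> \<circ> (1 \<otimes> (1 \<otimes> f) \<circ> \<eta>) \<circ> \<rho>\<inverse>, a composite of such pieces because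
\<epsilon> = s (\<sigma> \<circ> \<eta>) is an effect of this form, so every f has an adjoint. The adjoint is unique:
it satisfies \<epsilon> \<circ> (g \<otimes> 1) = s ((f \<otimes> 1) \<circ> \<sigma> \<circ> \<eta>), and the other snake equation recovers g
from \<epsilon> \<circ> (g \<otimes> 1). Hence f \<mapsto> its adjoint is a dagger extending s, and every dagger
extending s is of this form, since it sends f to an adjoint of f. Conversely, any
dagger restricts to a state dagger on states.
\<close>

locale smc =
  fixes C :: "('o, 'm) smc_data"
  assumes symmetric_monoidal: "symmetric_monoidal C"
begin

lemma monoidal: "monoidal C"
  using symmetric_monoidal unfolding symmetric_monoidal_def by blast

lemma category: "category C"
  using monoidal unfolding monoidal_def by blast

lemma id_hom [intro]: "Id C A \<in> Hom C A A"
  and comp_hom [intro]: "f \<in> Hom C A B \<Longrightarrow> g \<in> Hom C B D \<Longrightarrow> Cmp C g f \<in> Hom C A D"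
  and comp_assoc: "f \<in> Hom C A B \<Longrightarrow> g \<in> Hom C B D \<Longrightarrow> h \<in> Hom C D E \<Longrightarrow>
     Cmp C h (Cmp C g f) = Cmp C (Cmp C h g) f"
  and comp_id_left: "f \<in> Hom C A B \<Longrightarrow> Cmp C (Id C B) f = f"
  and comp_id_right: "f \<in> Hom C A B \<Longrightarrow> Cmp C f (Id C A) = f"
  and hom_unique: "f \<in> Hom C A B \<Longrightarrow> f \<in> Hom C A' B' \<Longrightarrow> A = A' \<and> B = B'"
  using category unfolding category_def by auto

lemma tensor_hom [intro]:
    "f \<in> Hom C A B \<Longrightarrow> g \<in> Hom C D E \<Longrightarrow> TenA C f g \<in> Hom C (Ten C A D) (Ten C B E)"
  and tensor_id: "TenA C (Id C A) (Id C B) = Id C (Ten C A B)"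
  and tensor_comp: "f \<in> Hom C A B \<Longrightarrow> g \<in> Hom C B D \<Longrightarrow>
     f' \<in> Hom C A' B' \<Longrightarrow> g' \<in> Hom C B' D' \<Longrightarrow>
     TenA C (Cmp C g f) (Cmp C g' f') = Cmp C (TenA C g g') (TenA C f f')"
  and assoc_iso: "is_iso C (Asc C A B D) (Ten C (Ten C A B) D) (Ten C A (Ten C B D))"
  and lunit_iso: "is_iso C (Lu C A) (Ten C (Unit C) A) A"
  and runit_iso: "is_iso C (Ru C A) (Ten C A (Unit C)) A"
  and assoc_natural: "f \<in> Hom C A A' \<Longrightarrow> g \<in> Hom C B B' \<Longrightarrow> h \<in> Hom C D D' \<Longrightarrow>
     Cmp C (Asc C A' B' D') (TenA C (TenA C f g) h) = Cmp C (TenA C f (TenA C g h)) (Asc C A B D)"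
  and lunit_natural: "f \<in> Hom C A A' \<Longrightarrow>
     Cmp C (Lu C A') (TenA C (Id C (Unit C)) f) = Cmp C f (Lu C A)"
  and runit_natural: "f \<in> Hom C A A' \<Longrightarrow>
     Cmp C (Ru C A') (TenA C f (Id C (Unit C))) = Cmp C f (Ru C A)"
  using monoidal unfolding monoidal_def by auto

lemma sym_hom [intro]: "Sy C A B \<in> Hom C (Ten C A B) (Ten C B A)"
  and sym_natural: "f \<in> Hom C A A' \<Longrightarrow> g \<in> Hom C B B' \<Longrightarrow>
     Cmp C (Sy C A' B') (TenA C f g) = Cmp C (TenA C g f) (Sy C A B)"
  and sym_sym: "Cmp C (Sy C B A) (Sy C A B) = Id C (Ten C A B)"
  using symmetric_monoidal unfolding symmetric_monoidal_def by auto

subsection \<open>Isomorphisms and coherence isomorphisms\<close>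

lemma iso_hom: "is_iso C f A B \<Longrightarrow> f \<in> Hom C A B"
  unfolding is_iso_def by blast

lemma inv_hom [intro]: "is_iso C f A B \<Longrightarrow> cinv C f \<in> Hom C B A"
  and inv_comp_left: "is_iso C f A B \<Longrightarrow> Cmp C (cinv C f) f = Id C A"
  and inv_comp_right: "is_iso C f A B \<Longrightarrow> Cmp C f (cinv C f) = Id C B"
proof -
  assume iso: "is_iso C f A B"
  then have "\<exists>g A B. f \<in> Hom C A B \<and> g \<in> Hom C B A \<and> Cmp C g f = Id C A \<and> Cmp C f g = Id C B"
    unfolding is_iso_def by blast
  then have "\<exists>A' B'. f \<in> Hom C A' B' \<and> cinv C f \<in> Hom C B' A' \<and>
      Cmp C (cinv C f) f = Id C A' \<and> Cmp C f (cinv C f) = Id C B'"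
    unfolding cinv_def by (rule someI_ex)
  with iso_hom[OF iso] hom_unique
  have "cinv C f \<in> Hom C B A \<and> Cmp C (cinv C f) f = Id C A \<and> Cmp C f (cinv C f) = Id C B"
    by blast
  then show "cinv C f \<in> Hom C B A" "Cmp C (cinv C f) f = Id C A" "Cmp C f (cinv C f) = Id C B"
    by blast+
qed

lemma inv_unique:
  assumes f: "f \<in> Hom C A B" and g: "g \<in> Hom C B A"
    and "Cmp C g f = Id C A" and "Cmp C f g = Id C B"
  shows "cinv C f = g"
proof -
  have iso: "is_iso C f A B"
    using assms unfolding is_iso_def by blast
  have "g = Cmp C g (Cmp C f (cinv C f))"
    using inv_comp_right[OF iso] comp_id_right[OF g] by simp
  also have "\<dots> = Cmp C (Cmp C g f) (cinv C f)"
    using comp_assoc[OF inv_hom[OF iso] f g] .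
  also have "\<dots> = cinv C f"
    using assms(3) comp_id_left inv_hom[OF iso] by metis
  finally show ?thesis by simp
qed

lemma iso_inv: "is_iso C f A B \<Longrightarrow> is_iso C (cinv C f) B A"
  unfolding is_iso_def[of _ "cinv C f"] using inv_comp_left inv_comp_right iso_hom by blast

lemma inv_inv: "is_iso C f A B \<Longrightarrow> cinv C (cinv C f) = f"
  using inv_unique[OF inv_hom iso_hom] inv_comp_left inv_comp_right by blast

lemma iso_id: "is_iso C (Id C A) A A"
  unfolding is_iso_def using comp_id_left id_hom by blast

lemma inv_id: "cinv C (Id C A) = Id C A"
  using inv_unique[OF id_hom id_hom] comp_id_left[OF id_hom] by blast

lemma iso_comp:
  assumes f: "is_iso C f A B" and g: "is_iso C g B D"
  shows "is_iso C (Cmp C g f) A D"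
proof -
  note homs = iso_hom[OF f] iso_hom[OF g] inv_hom[OF f] inv_hom[OF g]
  have "Cmp C (Cmp C (cinv C f) (cinv C g)) (Cmp C g f)
      = Cmp C (cinv C f) (Cmp C (Cmp C (cinv C g) g) f)"
    using comp_assoc[OF comp_hom[OF homs(1,2)] homs(4,3)] comp_assoc[OF homs(1,2,4)] by simp
  also have "\<dots> = Id C A"
    using inv_comp_left[OF g] inv_comp_left[OF f] comp_id_left[OF homs(1)] by simp
  finally have left: "Cmp C (Cmp C (cinv C f) (cinv C g)) (Cmp C g f) = Id C A" .
  have "Cmp C (Cmp C g f) (Cmp C (cinv C f) (cinv C g))
      = Cmp C g (Cmp C (Cmp C f (cinv C f)) (cinv C g))"
    using comp_assoc[OF comp_hom[OF homs(4,3)] homs(1,2)] comp_assoc[OF homs(4,3,1)] by simp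
  also have "\<dots> = Id C D"
    using inv_comp_right[OF g] inv_comp_right[OF f] comp_id_left[OF homs(4)] by simp
  finally have right: "Cmp C (Cmp C g f) (Cmp C (cinv C f) (cinv C g)) = Id C D" .
  show ?thesis
    unfolding is_iso_def using homs left right by blast
qed

lemma tensor_inverse:
  assumes f: "is_iso C f A B" and g: "is_iso C g D E"
  shows "Cmp C (TenA C (cinv C f) (cinv C g)) (TenA C f g) = Id C (Ten C A D)"
    and "Cmp C (TenA C f g) (TenA C (cinv C f) (cinv C g)) = Id C (Ten C B E)"
  using tensor_comp[OF iso_hom[OF f] inv_hom[OF f] iso_hom[OF g] inv_hom[OF g]]
    tensor_comp[OF inv_hom[OF f] iso_hom[OF f] inv_hom[OF g] iso_hom[OF g]]
    inv_comp_left[OF f] inv_comp_left[OF g] inv_comp_right[OF f] inv_comp_right[OF g] tensor_id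
  by simp_all

lemma iso_tensor: "is_iso C f A B \<Longrightarrow> is_iso C g D E \<Longrightarrow> is_iso C (TenA C f g) (Ten C A D) (Ten C B E)"
  unfolding is_iso_def[of _ "TenA C f g"] using tensor_inverse iso_hom inv_hom by blast

lemma inv_tensor:
  "is_iso C f A B \<Longrightarrow> is_iso C g D E \<Longrightarrow> cinv C (TenA C f g) = TenA C (cinv C f) (cinv C g)"
  using inv_unique tensor_inverse iso_hom inv_hom tensor_hom by meson

lemma assoc_hom [intro]: "Asc C A B D \<in> Hom C (Ten C (Ten C A B) D) (Ten C A (Ten C B D))"
  and assoc_inv_hom [intro]: "cinv C (Asc C A B D) \<in> Hom C (Ten C A (Ten C B D)) (Ten C (Ten C A B) D)"
  and lunit_hom [intro]: "Lu C A \<in> Hom C (Ten C (Unit C) A) A"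
  and lunit_inv_hom [intro]: "cinv C (Lu C A) \<in> Hom C A (Ten C (Unit C) A)"
  and runit_inv_hom [intro]: "cinv C (Ru C A) \<in> Hom C A (Ten C A (Unit C))"
  using assoc_iso lunit_iso runit_iso by (auto intro: iso_hom)

lemma iso_sym: "is_iso C (Sy C A B) (Ten C A B) (Ten C B A)"
  unfolding is_iso_def using sym_sym by blast

lemma inv_sym: "cinv C (Sy C A B) = Sy C B A"
  using inv_unique[OF sym_hom sym_hom] sym_sym by blast

lemma coh_ex_iso: "\<gamma> \<in> coh C \<Longrightarrow> \<exists>A B. is_iso C \<gamma> A B"
proof (induction rule: coh.induct)
  case (coh_cmp f g A B D)
  then have "is_iso C f A B" "is_iso C g B D"
    using hom_unique iso_hom by metis+
  then show ?case using iso_comp by blast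
qed (use iso_tensor iso_id assoc_iso lunit_iso runit_iso iso_sym iso_inv in blast)+

lemma coh_is_iso: "\<gamma> \<in> coh C \<Longrightarrow> \<gamma> \<in> Hom C A B \<Longrightarrow> is_iso C \<gamma> A B"
  using coh_ex_iso hom_unique iso_hom by metis

lemma inv_natural:
  assumes \<gamma>1: "is_iso C \<gamma>1 P Q" and \<gamma>2: "is_iso C \<gamma>2 P' Q'"
    and h: "h \<in> Hom C P' P" and k: "k \<in> Hom C Q' Q" and eq: "Cmp C \<gamma>1 h = Cmp C k \<gamma>2"
  shows "Cmp C h (cinv C \<gamma>2) = Cmp C (cinv C \<gamma>1) k"
proof -
  note homs = iso_hom[OF \<gamma>1] iso_hom[OF \<gamma>2] inv_hom[OF \<gamma>1] inv_hom[OF \<gamma>2]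
  have "Cmp C h (cinv C \<gamma>2) = Cmp C (Cmp C (cinv C \<gamma>1) \<gamma>1) (Cmp C h (cinv C \<gamma>2))"
    using inv_comp_left[OF \<gamma>1] comp_id_left[OF comp_hom[OF homs(4) h]] by simp
  also have "\<dots> = Cmp C (cinv C \<gamma>1) (Cmp C (Cmp C \<gamma>1 h) (cinv C \<gamma>2))"
    using comp_assoc[OF comp_hom[OF homs(4) h] homs(1,3)] comp_assoc[OF homs(4) h homs(1)] by simp
  also have "\<dots> = Cmp C (cinv C \<gamma>1) (Cmp C k (Cmp C \<gamma>2 (cinv C \<gamma>2)))"
    using eq comp_assoc[OF homs(4,2) k] by simp
  also have "\<dots> = Cmp C (cinv C \<gamma>1) k"
    using inv_comp_right[OF \<gamma>2] comp_id_right[OF k] by simp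
  finally show ?thesis .
qed

subsection \<open>Zigzag composites\<close>

lemma tensor_comp_id_right:
  "f \<in> Hom C A B \<Longrightarrow> g \<in> Hom C B D \<Longrightarrow>
   TenA C (Cmp C g f) (Id C X) = Cmp C (TenA C g (Id C X)) (TenA C f (Id C X))"
  using tensor_comp[OF _ _ id_hom id_hom] comp_id_left[OF id_hom] by metis

lemma tensor_comp_id_left:
  "f \<in> Hom C A B \<Longrightarrow> g \<in> Hom C B D \<Longrightarrow>
   TenA C (Id C X) (Cmp C g f) = Cmp C (TenA C (Id C X) g) (TenA C (Id C X) f)"
  using tensor_comp[OF id_hom id_hom] comp_id_left[OF id_hom] by metis

lemma tensor_factor_left:
  "f \<in> Hom C A B \<Longrightarrow> g \<in> Hom C D E \<Longrightarrow> TenA C f g = Cmp C (TenA C f (Id C E)) (TenA C (Id C A) g)"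
  using tensor_comp[OF id_hom _ _ id_hom] comp_id_left comp_id_right by metis

lemma tensor_factor_right:
  "f \<in> Hom C A B \<Longrightarrow> g \<in> Hom C D E \<Longrightarrow> TenA C f g = Cmp C (TenA C (Id C B) g) (TenA C f (Id C D))"
  using tensor_comp[OF _ id_hom id_hom] comp_id_left comp_id_right by metis

lemma tensor_id_assoc_conj:
  assumes h: "h \<in> Hom C P Q"
  shows "TenA C (TenA C h (Id C Y)) (Id C X)
    = Cmp C (cinv C (Asc C Q Y X)) (Cmp C (TenA C h (Id C (Ten C Y X))) (Asc C P Y X))"
proof -
  have hYX: "TenA C (TenA C h (Id C Y)) (Id C X) \<in> Hom C (Ten C (Ten C P Y) X) (Ten C (Ten C Q Y) X)"
    using h by blast
  have "TenA C (TenA C h (Id C Y)) (Id C X)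
      = Cmp C (cinv C (Asc C Q Y X)) (Cmp C (Asc C Q Y X) (TenA C (TenA C h (Id C Y)) (Id C X)))"
    using comp_assoc[OF hYX assoc_hom assoc_inv_hom] inv_comp_left[OF assoc_iso] comp_id_left[OF hYX] by simp
  also have "Cmp C (Asc C Q Y X) (TenA C (TenA C h (Id C Y)) (Id C X))
      = Cmp C (TenA C h (Id C (Ten C Y X))) (Asc C P Y X)"
    using assoc_natural[OF h id_hom id_hom] tensor_id by simp
  finally show ?thesis .
qed

lemma tensor_id_sym_conj:
  assumes h: "h \<in> Hom C P Q"
  shows "TenA C (Id C Y) h = Cmp C (Sy C Q Y) (Cmp C (TenA C h (Id C Y)) (Sy C Y P))"
proof -
  have "Cmp C (Sy C Q Y) (Cmp C (TenA C h (Id C Y)) (Sy C Y P))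
      = Cmp C (Cmp C (TenA C (Id C Y) h) (Sy C P Y)) (Sy C Y P)"
    using comp_assoc[OF sym_hom tensor_hom[OF h id_hom] sym_hom] sym_natural[OF h id_hom] by simp
  also have "\<dots> = TenA C (Id C Y) h"
    using comp_assoc[OF sym_hom sym_hom tensor_hom[OF id_hom h]] sym_sym
      comp_id_right[OF tensor_hom[OF id_hom h]] by simp
  finally show ?thesis by simp
qed

definition zigzag :: "'m \<Rightarrow> 'm \<Rightarrow> 'o \<Rightarrow> 'o \<Rightarrow> 'o \<Rightarrow> 'm" where
  "zigzag h k X M Y = Cmp C (Lu C Y) (Cmp C (TenA C h (Id C Y))
     (Cmp C (cinv C (Asc C X M Y)) (Cmp C (TenA C (Id C X) k) (cinv C (Ru C X)))))"

lemma zigzag_comp_left: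
  assumes h: "h \<in> Hom C (Ten C X M) (Unit C)" and k: "k \<in> Hom C (Unit C) (Ten C M Y)"
    and f: "f \<in> Hom C Y Z"
  shows "Cmp C f (zigzag h k X M Y) = zigzag h (Cmp C (TenA C (Id C M) f) k) X M Z"
proof -
  define R where "R = Cmp C (cinv C (Asc C X M Y)) (Cmp C (TenA C (Id C X) k) (cinv C (Ru C X)))"
  have R: "R \<in> Hom C X (Ten C (Ten C X M) Y)"
    unfolding R_def using k by blast
  have slide_f: "Cmp C (TenA C (Id C (Unit C)) f) (TenA C h (Id C Y))
      = Cmp C (TenA C h (Id C Z)) (TenA C (Id C (Ten C X M)) f)"
    using tensor_comp[OF h id_hom id_hom f] tensor_comp[OF id_hom h f id_hom]
      comp_id_left[OF h] comp_id_right[OF h] comp_id_left[OF f] comp_id_right[OF f] by simp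
  have "Cmp C (TenA C (Id C (Ten C X M)) f) (cinv C (Asc C X M Y))
      = Cmp C (cinv C (Asc C X M Z)) (TenA C (Id C X) (TenA C (Id C M) f))"
    by (rule inv_natural[OF assoc_iso assoc_iso])
      (use assoc_natural[OF id_hom id_hom f, of X M] tensor_id f in auto)
  then have slide_assoc: "Cmp C (TenA C (Id C (Ten C X M)) f) R
      = Cmp C (cinv C (Asc C X M Z)) (Cmp C (TenA C (Id C X) (Cmp C (TenA C (Id C M) f) k)) (cinv C (Ru C X)))"
    unfolding R_def
    using comp_assoc[OF comp_hom[OF runit_inv_hom tensor_hom[OF id_hom k]] assoc_inv_hom tensor_hom[OF id_hom f]]
      comp_assoc[OF comp_hom[OF runit_inv_hom tensor_hom[OF id_hom k]] tensor_hom[OF id_hom tensor_hom[OF id_hom f]] assoc_inv_hom]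
      comp_assoc[OF runit_inv_hom tensor_hom[OF id_hom k] tensor_hom[OF id_hom tensor_hom[OF id_hom f]]]
      tensor_comp_id_left[OF k tensor_hom[OF id_hom f]]
    by simp
  have "Cmp C f (zigzag h k X M Y) = Cmp C (Cmp C f (Lu C Y)) (Cmp C (TenA C h (Id C Y)) R)"
    unfolding zigzag_def R_def[symmetric] using comp_assoc[OF comp_hom[OF R tensor_hom[OF h id_hom]] lunit_hom f] .
  also have "\<dots> = Cmp C (Lu C Z) (Cmp C (Cmp C (TenA C (Id C (Unit C)) f) (TenA C h (Id C Y))) R)"
    using lunit_natural[OF f] comp_assoc[OF comp_hom[OF R tensor_hom[OF h id_hom]] tensor_hom[OF id_hom f] lunit_hom]
      comp_assoc[OF R tensor_hom[OF h id_hom] tensor_hom[OF id_hom f]] by simp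
  also have "\<dots> = Cmp C (Lu C Z) (Cmp C (TenA C h (Id C Z)) (Cmp C (TenA C (Id C (Ten C X M)) f) R))"
    using slide_f comp_assoc[OF R tensor_hom[OF id_hom f] tensor_hom[OF h id_hom]] by simp
  also have "\<dots> = zigzag h (Cmp C (TenA C (Id C M) f) k) X M Z"
    unfolding zigzag_def slide_assoc ..
  finally show ?thesis .
qed

lemma zigzag_comp_right:
  assumes h: "h \<in> Hom C (Ten C X M) (Unit C)" and k: "k \<in> Hom C (Unit C) (Ten C M Y)"
    and g: "g \<in> Hom C W X"
  shows "Cmp C (zigzag h k X M Y) g = zigzag (Cmp C h (TenA C g (Id C M))) k W M Y"
proof -
  define Q where "Q = Cmp C (TenA C (Id C W) k) (cinv C (Ru C W))"
  have Q: "Q \<in> Hom C W (Ten C W (Ten C M Y))"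
    unfolding Q_def using k by blast
  have "Cmp C (cinv C (Ru C X)) g = Cmp C (TenA C g (Id C (Unit C))) (cinv C (Ru C W))"
    by (rule inv_natural[OF runit_iso runit_iso, symmetric]) (use runit_natural[OF g] g in auto)
  moreover have "Cmp C (TenA C (Id C X) k) (TenA C g (Id C (Unit C)))
      = Cmp C (TenA C g (Id C (Ten C M Y))) (TenA C (Id C W) k)"
    using tensor_comp[OF g id_hom id_hom k] tensor_comp[OF id_hom g k id_hom]
      comp_id_left[OF g] comp_id_right[OF g] comp_id_left[OF k] comp_id_right[OF k] by simp
  ultimately have slide_runit: "Cmp C (Cmp C (TenA C (Id C X) k) (cinv C (Ru C X))) g
      = Cmp C (TenA C g (Id C (Ten C M Y))) Q"
    unfolding Q_def
    using comp_assoc[OF g runit_inv_hom tensor_hom[OF id_hom k]]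
      comp_assoc[OF runit_inv_hom tensor_hom[OF g id_hom] tensor_hom[OF id_hom k]]
      comp_assoc[OF runit_inv_hom tensor_hom[OF id_hom k] tensor_hom[OF g id_hom]]
    by simp
  have slide_assoc: "Cmp C (cinv C (Asc C X M Y)) (TenA C g (Id C (Ten C M Y)))
      = Cmp C (TenA C (TenA C g (Id C M)) (Id C Y)) (cinv C (Asc C W M Y))"
    by (rule inv_natural[OF assoc_iso assoc_iso, symmetric])
      (use assoc_natural[OF g id_hom id_hom, of M Y] tensor_id g in auto)
  have "Cmp C (zigzag h k X M Y) g
      = Cmp C (Lu C Y) (Cmp C (TenA C h (Id C Y)) (Cmp C (cinv C (Asc C X M Y))
          (Cmp C (TenA C g (Id C (Ten C M Y))) Q)))"
    unfolding zigzag_def slide_runit[symmetric]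
    using comp_assoc[OF g comp_hom[OF comp_hom[OF runit_inv_hom tensor_hom[OF id_hom k]] assoc_inv_hom] tensor_hom[OF h id_hom]]
      comp_assoc[OF g comp_hom[OF comp_hom[OF comp_hom[OF runit_inv_hom tensor_hom[OF id_hom k]] assoc_inv_hom] tensor_hom[OF h id_hom]] lunit_hom]
      comp_assoc[OF g comp_hom[OF runit_inv_hom tensor_hom[OF id_hom k]] assoc_inv_hom]
    by simp
  also have "\<dots> = Cmp C (Lu C Y) (Cmp C (TenA C (Cmp C h (TenA C g (Id C M))) (Id C Y))
      (Cmp C (cinv C (Asc C W M Y)) Q))"
    using slide_assoc tensor_comp_id_right[OF tensor_hom[OF g id_hom] h, of Y]
      comp_assoc[OF Q tensor_hom[OF g id_hom] assoc_inv_hom]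
      comp_assoc[OF Q assoc_inv_hom tensor_hom[OF tensor_hom[OF g id_hom] id_hom]]
      comp_assoc[OF comp_hom[OF Q assoc_inv_hom] tensor_hom[OF tensor_hom[OF g id_hom] id_hom] tensor_hom[OF h id_hom]]
    by simp
  also have "\<dots> = zigzag (Cmp C h (TenA C g (Id C M))) k W M Y"
    unfolding zigzag_def Q_def ..
  finally show ?thesis .
qed

lemma dual_zigzag: "is_dual C A As eta eps \<Longrightarrow> zigzag eps eta A As A = Id C A"
  unfolding is_dual_def zigzag_def by blast

lemma dual_homs:
  "is_dual C A As eta eps \<Longrightarrow> eta \<in> Hom C (Unit C) (Ten C As A) \<and> eps \<in> Hom C (Ten C A As) (Unit C)"
  unfolding is_dual_def by blast

lemma dual_zigzag_comp_left:
  assumes "is_dual C A As eta eps" and "f \<in> Hom C A B"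
  shows "zigzag eps (Cmp C (TenA C (Id C As) f) eta) A As B = f"
  using zigzag_comp_left[of eps A As eta A f B] assms dual_homs dual_zigzag comp_id_right by metis

lemma dual_zigzag_comp_right:
  assumes "is_dual C A As eta eps" and "g \<in> Hom C B A"
  shows "zigzag (Cmp C eps (TenA C g (Id C As))) eta B As A = g"
  using zigzag_comp_right[of eps A As eta A g B] assms dual_homs dual_zigzag comp_id_left by metis

subsection \<open>Daggers restrict to state daggers\<close>

lemma
  assumes "is_dagger C d"
  shows dagger_hom: "f \<in> Hom C A B \<Longrightarrow> d f \<in> Hom C B A"
    and dagger_dagger: "f \<in> Hom C A B \<Longrightarrow> d (d f) = f"
    and dagger_id: "d (Id C A) = Id C A"
    and dagger_comp: "f \<in> Hom C A B \<Longrightarrow> g \<in> Hom C B D \<Longrightarrow> d (Cmp C g f) = Cmp C (d f) (d g)"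
    and dagger_tensor: "f \<in> Hom C A B \<Longrightarrow> g \<in> Hom C D E \<Longrightarrow> d (TenA C f g) = TenA C (d f) (d g)"
    and dagger_coh: "\<gamma> \<in> coh C \<Longrightarrow> d \<gamma> = cinv C \<gamma>"
  using assms unfolding is_dagger_def by auto

lemma state_dagger_if_dagger:
  assumes dagger: "is_dagger C d"
  shows "state_dagger C d"
  unfolding state_dagger_def
proof (intro conjI allI impI)
  show "d \<psi> \<in> Hom C A (Unit C)" if "\<psi> \<in> Hom C (Unit C) A" for A \<psi>
    using dagger_hom[OF dagger that] .
  show "d (Id C (Unit C)) = Id C (Unit C)"
    using dagger_id[OF dagger] .
  show "d (Cmp C (TenA C \<psi> \<phi>) (cinv C (Lu C (Unit C)))) = Cmp C (Lu C (Unit C)) (TenA C (d \<psi>) (d \<phi>))"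
    if "\<psi> \<in> Hom C (Unit C) A" "\<phi> \<in> Hom C (Unit C) B" for A B \<psi> \<phi>
    using dagger_comp[OF dagger lunit_inv_hom tensor_hom[OF that]] dagger_tensor[OF dagger that]
      dagger_coh[OF dagger coh.coh_lui] inv_inv[OF lunit_iso] by simp
  show "d (Cmp C (Lu C B) (Cmp C (TenA C (d \<phi>) (Id C B)) \<psi>))
      = Cmp C (d \<psi>) (Cmp C (TenA C \<phi> (Id C B)) (cinv C (Lu C B)))"
    if \<psi>: "\<psi> \<in> Hom C (Unit C) (Ten C A B)" and \<phi>: "\<phi> \<in> Hom C (Unit C) A" for A B \<psi> \<phi>
  proof -
    have d\<phi>: "d \<phi> \<in> Hom C A (Unit C)"
      using dagger_hom[OF dagger \<phi>] .
    have "d (Cmp C (Lu C B) (Cmp C (TenA C (d \<phi>) (Id C B)) \<psi>))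
        = Cmp C (Cmp C (d \<psi>) (TenA C \<phi> (Id C B))) (cinv C (Lu C B))"
      using dagger_comp[OF dagger comp_hom[OF \<psi> tensor_hom[OF d\<phi> id_hom]] lunit_hom]
        dagger_comp[OF dagger \<psi> tensor_hom[OF d\<phi> id_hom]] dagger_tensor[OF dagger d\<phi> id_hom]
        dagger_dagger[OF dagger \<phi>] dagger_id[OF dagger] dagger_coh[OF dagger coh.coh_lu] by simp
    also have "\<dots> = Cmp C (d \<psi>) (Cmp C (TenA C \<phi> (Id C B)) (cinv C (Lu C B)))"
      using comp_assoc[OF lunit_inv_hom tensor_hom[OF \<phi> id_hom] dagger_hom[OF dagger \<psi>]] by simp
    finally show ?thesis .
  qed
  show "d (Cmp C \<gamma> \<psi>) = Cmp C (d \<psi>) (cinv C \<gamma>)"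
    if "\<psi> \<in> Hom C (Unit C) A" "\<gamma> \<in> coh C" "\<gamma> \<in> Hom C A A'" for A A' \<psi> \<gamma>
    using dagger_comp[OF dagger that(1,3)] dagger_coh[OF dagger that(2)] by simp
qed

lemma compat_state_dagger_if_compat_dagger:
  "compat_dagger C mu d \<Longrightarrow> compat_state_dagger C mu d"
  unfolding compat_dagger_def dagger_compact_def compat_state_dagger_def
  using state_dagger_if_dagger by blast

end

subsection \<open>Adjoints with respect to a state dagger\<close>

locale smc_state_dagger = smc C for C :: "('o, 'm) smc_data" +
  fixes s :: "'m \<Rightarrow> 'm"
  assumes state_dagger: "state_dagger C s"
    and state_dagger_duals: "\<forall>A. \<exists>As eta eps. is_dual C A As eta eps \<and> eps = s (Cmp C (Sy C As A) eta)"
begin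

lemma state_dagger_hom [intro]: "\<psi> \<in> Hom C (Unit C) A \<Longrightarrow> s \<psi> \<in> Hom C A (Unit C)"
  and state_dagger_unit: "s (Id C (Unit C)) = Id C (Unit C)"
  and state_dagger_tensor: "\<psi> \<in> Hom C (Unit C) A \<Longrightarrow> \<phi> \<in> Hom C (Unit C) B \<Longrightarrow>
     s (Cmp C (TenA C \<psi> \<phi>) (cinv C (Lu C (Unit C)))) = Cmp C (Lu C (Unit C)) (TenA C (s \<psi>) (s \<phi>))"
  and state_dagger_partial: "\<psi> \<in> Hom C (Unit C) (Ten C A B) \<Longrightarrow> \<phi> \<in> Hom C (Unit C) A \<Longrightarrow>
     s (Cmp C (Lu C B) (Cmp C (TenA C (s \<phi>) (Id C B)) \<psi>))
       = Cmp C (s \<psi>) (Cmp C (TenA C \<phi> (Id C B)) (cinv C (Lu C B)))"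
  and state_dagger_coh: "\<psi> \<in> Hom C (Unit C) A \<Longrightarrow> \<gamma> \<in> coh C \<Longrightarrow> \<gamma> \<in> Hom C A A' \<Longrightarrow>
     s (Cmp C \<gamma> \<psi>) = Cmp C (s \<psi>) (cinv C \<gamma>)"
  using state_dagger unfolding state_dagger_def by auto

definition state_adjoint :: "'m \<Rightarrow> 'm \<Rightarrow> 'o \<Rightarrow> 'o \<Rightarrow> bool" where
  "state_adjoint f g A B \<longleftrightarrow> f \<in> Hom C A B \<and> g \<in> Hom C B A \<and>
     (\<forall>\<psi> \<in> Hom C (Unit C) A. s (Cmp C f \<psi>) = Cmp C (s \<psi>) g)"

lemma state_adjoint_comp:
  assumes fg: "state_adjoint f g A B" and fg': "state_adjoint f' g' B D"
  shows "state_adjoint (Cmp C f' f) (Cmp C g g') A D"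
proof -
  have f: "f \<in> Hom C A B" and g: "g \<in> Hom C B A" and f': "f' \<in> Hom C B D" and g': "g' \<in> Hom C D B"
    using fg fg' unfolding state_adjoint_def by blast+
  have "s (Cmp C (Cmp C f' f) \<psi>) = Cmp C (s \<psi>) (Cmp C g g')" if \<psi>: "\<psi> \<in> Hom C (Unit C) A" for \<psi>
  proof -
    have "s (Cmp C (Cmp C f' f) \<psi>) = s (Cmp C f' (Cmp C f \<psi>))"
      using comp_assoc[OF \<psi> f f'] by simp
    also have "\<dots> = Cmp C (s (Cmp C f \<psi>)) g'"
      using fg' comp_hom[OF \<psi> f] unfolding state_adjoint_def by blast
    also have "\<dots> = Cmp C (Cmp C (s \<psi>) g) g'"
      using fg \<psi> unfolding state_adjoint_def by simp
    also have "\<dots> = Cmp C (s \<psi>) (Cmp C g g')"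
      using comp_assoc[OF g' g state_dagger_hom[OF \<psi>]] by simp
    finally show ?thesis .
  qed
  then show ?thesis
    unfolding state_adjoint_def using f g f' g' by blast
qed

lemma state_adjoint_coh:
  "\<gamma> \<in> coh C \<Longrightarrow> \<gamma> \<in> Hom C A B \<Longrightarrow> state_adjoint \<gamma> (cinv C \<gamma>) A B"
  unfolding state_adjoint_def using state_dagger_coh inv_hom[OF coh_is_iso] by blast

lemma state_adjoint_inverse:
  assumes iso: "is_iso C f A B" and adj: "state_adjoint f (cinv C f) A B"
  shows "state_adjoint (cinv C f) f B A"
proof -
  have "s (Cmp C (cinv C f) \<psi>) = Cmp C (s \<psi>) f" if \<psi>: "\<psi> \<in> Hom C (Unit C) B" for \<psi>
  proof -
    define \<psi>' where "\<psi>' = Cmp C (cinv C f) \<psi>"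
    have \<psi>': "\<psi>' \<in> Hom C (Unit C) A"
      unfolding \<psi>'_def using \<psi> iso by blast
    have "\<psi> = Cmp C f \<psi>'"
      unfolding \<psi>'_def using comp_assoc[OF \<psi> inv_hom[OF iso] iso_hom[OF iso]]
        inv_comp_right[OF iso] comp_id_left[OF \<psi>] by simp
    then have "Cmp C (s \<psi>) f = Cmp C (Cmp C (s \<psi>') (cinv C f)) f"
      using adj \<psi>' unfolding state_adjoint_def by simp
    also have "\<dots> = s \<psi>'"
      using comp_assoc[OF iso_hom[OF iso] inv_hom[OF iso] state_dagger_hom[OF \<psi>']]
        inv_comp_left[OF iso] comp_id_right[OF state_dagger_hom[OF \<psi>']] by simp
    finally show ?thesis
      unfolding \<psi>'_def by simp
  qed
  then show ?thesis
    unfolding state_adjoint_def using iso_hom[OF iso] inv_hom[OF iso] by blast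
qed

lemma state_adjoint_effect:
  assumes \<phi>: "\<phi> \<in> Hom C (Unit C) Y"
  shows "state_adjoint (TenA C (s \<phi>) (Id C Z)) (TenA C \<phi> (Id C Z)) (Ten C Y Z) (Ten C (Unit C) Z)"
proof -
  have "s (Cmp C (TenA C (s \<phi>) (Id C Z)) \<Psi>) = Cmp C (s \<Psi>) (TenA C \<phi> (Id C Z))"
    if \<Psi>: "\<Psi> \<in> Hom C (Unit C) (Ten C Y Z)" for \<Psi>
  proof -
    define \<chi> where "\<chi> = Cmp C (TenA C (s \<phi>) (Id C Z)) \<Psi>"
    have \<chi>: "\<chi> \<in> Hom C (Unit C) (Ten C (Unit C) Z)"
      unfolding \<chi>_def using \<Psi> \<phi> by blast
    have "\<chi> = Cmp C (cinv C (Lu C Z)) (Cmp C (Lu C Z) \<chi>)"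
      using comp_assoc[OF \<chi> lunit_hom lunit_inv_hom] inv_comp_left[OF lunit_iso] comp_id_left[OF \<chi>] by simp
    then have "s \<chi> = Cmp C (s (Cmp C (Lu C Z) \<chi>)) (Lu C Z)"
      using state_dagger_coh[OF comp_hom[OF \<chi> lunit_hom] coh.coh_lui lunit_inv_hom] inv_inv[OF lunit_iso] by simp
    also have "\<dots> = Cmp C (Cmp C (s \<Psi>) (Cmp C (TenA C \<phi> (Id C Z)) (cinv C (Lu C Z)))) (Lu C Z)"
      unfolding \<chi>_def using state_dagger_partial[OF \<Psi> \<phi>] by simp
    also have "\<dots> = Cmp C (s \<Psi>) (TenA C \<phi> (Id C Z))"
      using comp_assoc[OF lunit_hom lunit_inv_hom tensor_hom[OF \<phi> id_hom]]
        comp_assoc[OF lunit_hom comp_hom[OF lunit_inv_hom tensor_hom[OF \<phi> id_hom]] state_dagger_hom[OF \<Psi>]]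
        inv_comp_left[OF lunit_iso] comp_id_right[OF tensor_hom[OF \<phi> id_hom]] by simp
    finally show ?thesis
      unfolding \<chi>_def .
  qed
  then show ?thesis
    unfolding state_adjoint_def using \<phi> by blast
qed

lemma state_adjoint_state:
  assumes \<phi>: "\<phi> \<in> Hom C (Unit C) Y"
  shows "state_adjoint (TenA C \<phi> (Id C Z)) (TenA C (s \<phi>) (Id C Z)) (Ten C (Unit C) Z) (Ten C Y Z)"
proof -
  have "s (Cmp C (TenA C \<phi> (Id C Z)) \<Psi>) = Cmp C (s \<Psi>) (TenA C (s \<phi>) (Id C Z))"
    if \<Psi>: "\<Psi> \<in> Hom C (Unit C) (Ten C (Unit C) Z)" for \<Psi>
  proof -
    define \<chi> where "\<chi> = Cmp C (Lu C Z) \<Psi>"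
    have \<chi>: "\<chi> \<in> Hom C (Unit C) Z"
      unfolding \<chi>_def using \<Psi> by blast
    have \<Psi>_eq: "\<Psi> = Cmp C (cinv C (Lu C Z)) \<chi>"
      unfolding \<chi>_def using comp_assoc[OF \<Psi> lunit_hom lunit_inv_hom] inv_comp_left[OF lunit_iso]
        comp_id_left[OF \<Psi>] by simp
    have "Cmp C (cinv C (Lu C Z)) \<chi> = Cmp C (TenA C (Id C (Unit C)) \<chi>) (cinv C (Lu C (Unit C)))"
      by (rule inv_natural[OF lunit_iso lunit_iso, symmetric]) (use lunit_natural[OF \<chi>] \<chi> in auto)
    then have "Cmp C (TenA C \<phi> (Id C Z)) \<Psi>
        = Cmp C (Cmp C (TenA C \<phi> (Id C Z)) (TenA C (Id C (Unit C)) \<chi>)) (cinv C (Lu C (Unit C)))"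
      using \<Psi>_eq comp_assoc[OF lunit_inv_hom tensor_hom[OF id_hom \<chi>] tensor_hom[OF \<phi> id_hom]] by simp
    also have "Cmp C (TenA C \<phi> (Id C Z)) (TenA C (Id C (Unit C)) \<chi>) = TenA C \<phi> \<chi>"
      using tensor_comp[OF id_hom \<phi> \<chi> id_hom] comp_id_right[OF \<phi>] comp_id_left[OF \<chi>] by simp
    finally have "s (Cmp C (TenA C \<phi> (Id C Z)) \<Psi>) = Cmp C (Lu C (Unit C)) (TenA C (s \<phi>) (s \<chi>))"
      using state_dagger_tensor[OF \<phi> \<chi>] by simp
    also have "TenA C (s \<phi>) (s \<chi>) = Cmp C (TenA C (Id C (Unit C)) (s \<chi>)) (TenA C (s \<phi>) (Id C Z))"
      using tensor_comp[OF state_dagger_hom[OF \<phi>] id_hom id_hom state_dagger_hom[OF \<chi>]]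
        comp_id_left[OF state_dagger_hom[OF \<phi>]] comp_id_right[OF state_dagger_hom[OF \<chi>]] by simp
    also have "Cmp C (Lu C (Unit C)) (Cmp C (TenA C (Id C (Unit C)) (s \<chi>)) (TenA C (s \<phi>) (Id C Z)))
        = Cmp C (Cmp C (s \<chi>) (Lu C Z)) (TenA C (s \<phi>) (Id C Z))"
      using comp_assoc[OF tensor_hom[OF state_dagger_hom[OF \<phi>] id_hom] tensor_hom[OF id_hom state_dagger_hom[OF \<chi>]] lunit_hom]
        lunit_natural[OF state_dagger_hom[OF \<chi>]] by simp
    also have "Cmp C (s \<chi>) (Lu C Z) = s \<Psi>"
      using \<Psi>_eq state_dagger_coh[OF \<chi> coh.coh_lui lunit_inv_hom] inv_inv[OF lunit_iso] by simp
    finally show ?thesis .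
  qed
  then show ?thesis
    unfolding state_adjoint_def using \<phi> by blast
qed

text \<open>The ancilla X makes adjoints closed under \<otimes>, and duals make them unique.\<close>

definition adjoint :: "'m \<Rightarrow> 'm \<Rightarrow> 'o \<Rightarrow> 'o \<Rightarrow> bool" where
  "adjoint f g A B \<longleftrightarrow> f \<in> Hom C A B \<and> g \<in> Hom C B A \<and>
     (\<forall>X. state_adjoint (TenA C f (Id C X)) (TenA C g (Id C X)) (Ten C A X) (Ten C B X))"

lemma adjointD: "adjoint f g A B \<Longrightarrow> f \<in> Hom C A B \<and> g \<in> Hom C B A"
  unfolding adjoint_def by blast

lemma adjoint_comp:
  assumes fg: "adjoint f g A B" and fg': "adjoint f' g' B D"
  shows "adjoint (Cmp C f' f) (Cmp C g g') A D"
proof -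
  have f: "f \<in> Hom C A B" and g: "g \<in> Hom C B A" and f': "f' \<in> Hom C B D" and g': "g' \<in> Hom C D B"
    using fg fg' unfolding adjoint_def by blast+
  have "state_adjoint (TenA C (Cmp C f' f) (Id C X)) (TenA C (Cmp C g g') (Id C X)) (Ten C A X) (Ten C D X)"
    for X
    using state_adjoint_comp[of "TenA C f (Id C X)" "TenA C g (Id C X)" "Ten C A X" "Ten C B X"] fg fg'
      tensor_comp_id_right[OF f f'] tensor_comp_id_right[OF g' g]
    unfolding adjoint_def by simp
  then show ?thesis
    unfolding adjoint_def using f g f' g' by blast
qed

lemma adjoint_coh:
  assumes "\<gamma> \<in> coh C" and "\<gamma> \<in> Hom C A B"
  shows "adjoint \<gamma> (cinv C \<gamma>) A B"
proof -
  have "state_adjoint (TenA C \<gamma> (Id C X)) (TenA C (cinv C \<gamma>) (Id C X)) (Ten C A X) (Ten C B X)" for X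
    using state_adjoint_coh[OF coh.coh_ten[OF assms(1) coh.coh_id] tensor_hom[OF assms(2) id_hom]]
      inv_tensor[OF coh_is_iso[OF assms] iso_id] inv_id by simp
  then show ?thesis
    unfolding adjoint_def using assms inv_hom[OF coh_is_iso[OF assms]] by blast
qed

lemma adjoint_inverse:
  assumes iso: "is_iso C f A B" and adj: "adjoint f (cinv C f) A B"
  shows "adjoint (cinv C f) f B A"
proof -
  have "state_adjoint (TenA C (cinv C f) (Id C X)) (TenA C f (Id C X)) (Ten C B X) (Ten C A X)" for X
  proof -
    have iso_X: "is_iso C (TenA C f (Id C X)) (Ten C A X) (Ten C B X)"
      using iso_tensor[OF iso iso_id] .
    have inv_X: "cinv C (TenA C f (Id C X)) = TenA C (cinv C f) (Id C X)"
      using inv_tensor[OF iso iso_id] inv_id by simp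
    show ?thesis
      using state_adjoint_inverse[OF iso_X] adj unfolding adjoint_def inv_X by blast
  qed
  then show ?thesis
    unfolding adjoint_def using iso_hom[OF iso] inv_hom[OF iso] by blast
qed

lemma adjoint_id: "adjoint (Id C A) (Id C A) A A"
  using adjoint_coh[OF coh.coh_id id_hom] inv_id by simp

lemma adjoint_effect: "\<phi> \<in> Hom C (Unit C) Y \<Longrightarrow> adjoint (s \<phi>) \<phi> Y (Unit C)"
  unfolding adjoint_def using state_adjoint_effect by blast

lemma adjoint_state: "\<phi> \<in> Hom C (Unit C) Y \<Longrightarrow> adjoint \<phi> (s \<phi>) (Unit C) Y"
  unfolding adjoint_def using state_adjoint_state by blast

lemma adjoint_tensor_id_right:
  assumes fg: "adjoint f g A B"
  shows "adjoint (TenA C f (Id C Y)) (TenA C g (Id C Y)) (Ten C A Y) (Ten C B Y)"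
proof -
  have f: "f \<in> Hom C A B" and g: "g \<in> Hom C B A"
    using adjointD[OF fg] by blast+
  have "state_adjoint (TenA C (TenA C f (Id C Y)) (Id C X)) (TenA C (TenA C g (Id C Y)) (Id C X))
      (Ten C (Ten C A Y) X) (Ten C (Ten C B Y) X)" for X
  proof -
    have "state_adjoint (TenA C f (Id C (Ten C Y X))) (TenA C g (Id C (Ten C Y X)))
        (Ten C A (Ten C Y X)) (Ten C B (Ten C Y X))"
      using fg unfolding adjoint_def by blast
    then have "state_adjoint (Cmp C (cinv C (Asc C B Y X)) (Cmp C (TenA C f (Id C (Ten C Y X))) (Asc C A Y X)))
        (Cmp C (Cmp C (cinv C (Asc C A Y X)) (TenA C g (Id C (Ten C Y X)))) (Asc C B Y X))
        (Ten C (Ten C A Y) X) (Ten C (Ten C B Y) X)"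
      using state_adjoint_comp state_adjoint_coh[OF coh.coh_asc assoc_hom]
        state_adjoint_inverse[OF assoc_iso state_adjoint_coh[OF coh.coh_asc assoc_hom]] by blast
    then show ?thesis
      using tensor_id_assoc_conj[OF f] tensor_id_assoc_conj[OF g]
        comp_assoc[OF assoc_hom tensor_hom[OF g id_hom] assoc_inv_hom] by simp
  qed
  then show ?thesis
    unfolding adjoint_def using f g by blast
qed

lemma adjoint_tensor_id_left:
  assumes fg: "adjoint f g A B"
  shows "adjoint (TenA C (Id C Y) f) (TenA C (Id C Y) g) (Ten C Y A) (Ten C Y B)"
proof -
  have f: "f \<in> Hom C A B" and g: "g \<in> Hom C B A"
    using adjointD[OF fg] by blast+
  have "adjoint (Sy C P Q) (Sy C Q P) (Ten C P Q) (Ten C Q P)" for P Q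
    using adjoint_coh[OF coh.coh_sy sym_hom] inv_sym by simp
  then have "adjoint (Cmp C (Sy C B Y) (Cmp C (TenA C f (Id C Y)) (Sy C Y A)))
      (Cmp C (Cmp C (Sy C A Y) (TenA C g (Id C Y))) (Sy C Y B)) (Ten C Y A) (Ten C Y B)"
    using adjoint_comp adjoint_tensor_id_right[OF fg] by blast
  then show ?thesis
    using tensor_id_sym_conj[OF f] tensor_id_sym_conj[OF g]
      comp_assoc[OF sym_hom tensor_hom[OF g id_hom] sym_hom] by simp
qed

lemma adjoint_tensor:
  assumes fg: "adjoint f g A B" and fg': "adjoint f' g' A' B'"
  shows "adjoint (TenA C f f') (TenA C g g') (Ten C A A') (Ten C B B')"
proof -
  have f: "f \<in> Hom C A B" and g: "g \<in> Hom C B A" and f': "f' \<in> Hom C A' B'" and g': "g' \<in> Hom C B' A'"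
    using adjointD[OF fg] adjointD[OF fg'] by blast+
  have "adjoint (Cmp C (TenA C f (Id C B')) (TenA C (Id C A) f'))
      (Cmp C (TenA C (Id C A) g') (TenA C g (Id C B'))) (Ten C A A') (Ten C B B')"
    using adjoint_comp[OF adjoint_tensor_id_left[OF fg'] adjoint_tensor_id_right[OF fg]] .
  then show ?thesis
    using tensor_factor_left[OF f f'] tensor_factor_right[OF g g'] by simp
qed

lemma adjoint_unique:
  assumes fg: "adjoint f g A B" and fg': "adjoint f g' A B"
  shows "g = g'"
proof -
  obtain As eta eps where dual: "is_dual C A As eta eps" and eps: "eps = s (Cmp C (Sy C As A) eta)"
    using state_dagger_duals by blast
  have \<psi>: "Cmp C (Sy C As A) eta \<in> Hom C (Unit C) (Ten C A As)"
    using dual_homs[OF dual] by blast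
  have "Cmp C eps (TenA C g (Id C As)) = s (Cmp C (TenA C f (Id C As)) (Cmp C (Sy C As A) eta))"
    if "adjoint f g A B" for g
    using that \<psi> unfolding eps adjoint_def state_adjoint_def by simp
  then have "Cmp C eps (TenA C g (Id C As)) = Cmp C eps (TenA C g' (Id C As))"
    using fg fg' by simp
  then show ?thesis
    using dual_zigzag_comp_right[OF dual] adjointD[OF fg] adjointD[OF fg'] by metis
qed

definition has_adjoint :: "'m \<Rightarrow> 'o \<Rightarrow> 'o \<Rightarrow> bool" where
  "has_adjoint f A B \<longleftrightarrow> (\<exists>g. adjoint f g A B \<and> adjoint g f B A)"

lemma has_adjoint_comp: "has_adjoint f A B \<Longrightarrow> has_adjoint f' B D \<Longrightarrow> has_adjoint (Cmp C f' f) A D"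
  unfolding has_adjoint_def using adjoint_comp by blast

lemma has_adjoint_tensor_id_right:
  "has_adjoint f A B \<Longrightarrow> has_adjoint (TenA C f (Id C Y)) (Ten C A Y) (Ten C B Y)"
  unfolding has_adjoint_def using adjoint_tensor_id_right by blast

lemma has_adjoint_tensor_id_left:
  "has_adjoint f A B \<Longrightarrow> has_adjoint (TenA C (Id C Y) f) (Ten C Y A) (Ten C Y B)"
  unfolding has_adjoint_def using adjoint_tensor_id_left by blast

lemma has_adjoint_coh: "\<gamma> \<in> coh C \<Longrightarrow> \<gamma> \<in> Hom C A B \<Longrightarrow> has_adjoint \<gamma> A B"
  unfolding has_adjoint_def using adjoint_coh adjoint_inverse coh_is_iso by blast

lemma has_adjoint_state: "\<phi> \<in> Hom C (Unit C) Y \<Longrightarrow> has_adjoint \<phi> (Unit C) Y"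
  and has_adjoint_effect: "\<phi> \<in> Hom C (Unit C) Y \<Longrightarrow> has_adjoint (s \<phi>) Y (Unit C)"
  unfolding has_adjoint_def using adjoint_state adjoint_effect by blast+

lemma has_adjoint_zigzag:
  assumes \<phi>: "\<phi> \<in> Hom C (Unit C) (Ten C X M)" and \<psi>: "\<psi> \<in> Hom C (Unit C) (Ten C M Y)"
  shows "has_adjoint (zigzag (s \<phi>) \<psi> X M Y) X Y"
proof -
  have runit: "has_adjoint (cinv C (Ru C X)) X (Ten C X (Unit C))"
    using has_adjoint_coh[OF coh.coh_rui runit_inv_hom] .
  have state: "has_adjoint (TenA C (Id C X) \<psi>) (Ten C X (Unit C)) (Ten C X (Ten C M Y))"
    using has_adjoint_tensor_id_left[OF has_adjoint_state[OF \<psi>]] .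
  have assoc: "has_adjoint (cinv C (Asc C X M Y)) (Ten C X (Ten C M Y)) (Ten C (Ten C X M) Y)"
    using has_adjoint_coh[OF coh.coh_asci assoc_inv_hom] .
  have effect: "has_adjoint (TenA C (s \<phi>) (Id C Y)) (Ten C (Ten C X M) Y) (Ten C (Unit C) Y)"
    using has_adjoint_tensor_id_right[OF has_adjoint_effect[OF \<phi>]] .
  have lunit: "has_adjoint (Lu C Y) (Ten C (Unit C) Y) Y"
    using has_adjoint_coh[OF coh.coh_lu lunit_hom] .
  show ?thesis
    unfolding zigzag_def
    using has_adjoint_comp[OF has_adjoint_comp[OF has_adjoint_comp[OF has_adjoint_comp[OF
        runit state] assoc] effect] lunit] .
qed

lemma has_adjoint_if_hom:
  assumes f: "f \<in> Hom C A B"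
  shows "has_adjoint f A B"
proof -
  obtain As eta eps where dual: "is_dual C A As eta eps" and eps: "eps = s (Cmp C (Sy C As A) eta)"
    using state_dagger_duals by blast
  have "has_adjoint (zigzag eps (Cmp C (TenA C (Id C As) f) eta) A As B) A B"
    unfolding eps using has_adjoint_zigzag dual_homs[OF dual] f by blast
  then show ?thesis
    using dual_zigzag_comp_left[OF dual f] by simp
qed

definition induced_dagger :: "'m \<Rightarrow> 'm" where
  "induced_dagger f = (SOME g. \<exists>A B. adjoint f g A B)"

lemma induced_dagger_eq:
  assumes fg: "adjoint f g A B"
  shows "induced_dagger f = g"
proof -
  have "\<exists>A B. adjoint f (induced_dagger f) A B"
    unfolding induced_dagger_def by (rule someI_ex) (use fg in blast)
  then obtain A' B' where fg': "adjoint f (induced_dagger f) A' B'"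
    by blast
  have "A' = A" and "B' = B"
    using hom_unique[OF conjunct1[OF adjointD[OF fg']] conjunct1[OF adjointD[OF fg]]] by simp_all
  with fg' have "adjoint f (induced_dagger f) A B"
    by simp
  then show ?thesis
    using adjoint_unique[OF _ fg] by blast
qed

lemma induced_dagger_adjoint:
  assumes f: "f \<in> Hom C A B"
  shows "adjoint f (induced_dagger f) A B" and "adjoint (induced_dagger f) f B A"
proof -
  obtain g where "adjoint f g A B" and "adjoint g f B A"
    using has_adjoint_if_hom[OF f] unfolding has_adjoint_def by blast
  moreover have "induced_dagger f = g"
    using induced_dagger_eq[OF calculation(1)] .
  ultimately show "adjoint f (induced_dagger f) A B" and "adjoint (induced_dagger f) f B A"
    by simp_all
qed

lemma induced_dagger_state: "\<psi> \<in> Hom C (Unit C) A \<Longrightarrow> induced_dagger \<psi> = s \<psi>"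
  using induced_dagger_eq[OF adjoint_state] .

lemma is_dagger_induced_dagger: "is_dagger C induced_dagger"
  unfolding is_dagger_def
proof (intro conjI allI impI ballI)
  fix A B f
  assume f: "f \<in> Hom C A B"
  show "induced_dagger f \<in> Hom C B A"
    using adjointD[OF induced_dagger_adjoint(1)[OF f]] by blast
  show "induced_dagger (induced_dagger f) = f"
    using induced_dagger_eq[OF induced_dagger_adjoint(2)[OF f]] .
next
  fix A
  show "induced_dagger (Id C A) = Id C A"
    using induced_dagger_eq[OF adjoint_id] .
next
  fix A B D f g
  assume f: "f \<in> Hom C A B" and g: "g \<in> Hom C B D"
  show "induced_dagger (Cmp C g f) = Cmp C (induced_dagger f) (induced_dagger g)"
    using induced_dagger_eq[OF adjoint_comp[OF induced_dagger_adjoint(1)[OF f] induced_dagger_adjoint(1)[OF g]]] .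
next
  fix A B D E f g
  assume f: "f \<in> Hom C A B" and g: "g \<in> Hom C D E"
  show "induced_dagger (TenA C f g) = TenA C (induced_dagger f) (induced_dagger g)"
    using induced_dagger_eq[OF adjoint_tensor[OF induced_dagger_adjoint(1)[OF f] induced_dagger_adjoint(1)[OF g]]] .
next
  fix \<gamma>
  assume \<gamma>: "\<gamma> \<in> coh C"
  then obtain A B where "is_iso C \<gamma> A B"
    using coh_ex_iso by blast
  then show "induced_dagger \<gamma> = cinv C \<gamma>"
    using induced_dagger_eq[OF adjoint_coh[OF \<gamma> iso_hom]] by blast
qed

lemma dagger_eq_induced_dagger:
  assumes dagger: "is_dagger C d" and on_states: "\<And>A \<psi>. \<psi> \<in> Hom C (Unit C) A \<Longrightarrow> d \<psi> = s \<psi>"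
    and f: "f \<in> Hom C A B"
  shows "d f = induced_dagger f"
proof -
  have "s (Cmp C (TenA C f (Id C X)) \<psi>) = Cmp C (s \<psi>) (TenA C (d f) (Id C X))"
    if \<psi>: "\<psi> \<in> Hom C (Unit C) (Ten C A X)" for X \<psi>
  proof -
    have "s (Cmp C (TenA C f (Id C X)) \<psi>) = d (Cmp C (TenA C f (Id C X)) \<psi>)"
      using on_states[OF comp_hom[OF \<psi> tensor_hom[OF f id_hom]]] by simp
    also have "\<dots> = Cmp C (d \<psi>) (TenA C (d f) (Id C X))"
      using dagger_comp[OF dagger \<psi> tensor_hom[OF f id_hom]] dagger_tensor[OF dagger f id_hom]
        dagger_id[OF dagger] by simp
    finally show ?thesis
      using on_states[OF \<psi>] by simp
  qed
  then have "adjoint f (d f) A B"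
    unfolding adjoint_def state_adjoint_def using f dagger_hom[OF dagger f] by blast
  then show ?thesis
    using induced_dagger_eq by simp
qed

lemma compat_dagger_induced_dagger:
  assumes mu: "mixed_states C mu" and compat: "compat_state_dagger C mu s"
  shows "compat_dagger C mu induced_dagger"
proof -
  have mu_hom: "mu A \<in> Hom C (Unit C) A" for A
    using mu unfolding mixed_states_def by blast
  have discard_eq: "(\<lambda>A. induced_dagger (mu A)) = (\<lambda>A. s (mu A))"
    using induced_dagger_state[OF mu_hom] by simp
  have "discarding C (\<lambda>A. s (mu A))"
    unfolding discarding_def
  proof (intro conjI allI)
    show "s (mu A) \<in> Hom C A (Unit C)" for A
      using state_dagger_hom[OF mu_hom] .
    show "s (mu (Ten C A B)) = Cmp C (Lu C (Unit C)) (TenA C (s (mu A)) (s (mu B)))" for A B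
      using mu state_dagger_tensor[OF mu_hom mu_hom] unfolding mixed_states_def by simp
    show "s (mu (Unit C)) = Id C (Unit C)"
      using mu state_dagger_unit unfolding mixed_states_def by simp
  qed
  moreover have "\<exists>As eta eps. is_dual C A As eta eps \<and> eps = induced_dagger (Cmp C (Sy C As A) eta) \<and>
      disc_compat C (\<lambda>B. s (mu B)) mu A As eta" for A
  proof -
    obtain As eta eps where dual: "is_dual C A As eta eps" and eps: "eps = s (Cmp C (Sy C As A) eta)"
      and "disc_compat C (\<lambda>B. s (mu B)) mu A As eta"
      using compat unfolding compat_state_dagger_def by blast
    moreover have "eps = induced_dagger (Cmp C (Sy C As A) eta)"
      using eps induced_dagger_state[OF comp_hom[OF conjunct1[OF dual_homs[OF dual]] sym_hom]] by simp
    ultimately show ?thesis by blast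
  qed
  ultimately show ?thesis
    unfolding compat_dagger_def dagger_compact_def discard_eq
    using is_dagger_induced_dagger by blast
qed

end

theorem mainTheorem2:
  fixes C :: "('o, 'm) smc_data" and mu :: "'o \<Rightarrow> 'm"
  assumes "symmetric_monoidal C" and "mixed_states C mu"
  shows "(\<forall>d. compat_dagger C mu d \<longrightarrow> compat_state_dagger C mu d) \<and>
         (\<forall>s. compat_state_dagger C mu s \<longrightarrow>
            (\<exists>d. compat_dagger C mu d \<and>
                 (\<forall>A. \<forall>\<psi> \<in> Hom C (Unit C) A. d \<psi> = s \<psi>) \<and>
                 (\<forall>d'. compat_dagger C mu d' \<and> (\<forall>A. \<forall>\<psi> \<in> Hom C (Unit C) A. d' \<psi> = s \<psi>) \<longrightarrow>
                      (\<forall>A B. \<forall>f \<in> Hom C A B. d' f = d f))))"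
proof (intro conjI allI impI, goal_cases)
  case (1 d)
  show ?case
    using smc.compat_state_dagger_if_compat_dagger[OF smc.intro[OF assms(1)] 1] .
next
  case (2 s)
  interpret smc_state_dagger C s
    using assms(1) 2 unfolding compat_state_dagger_def
    by (intro smc_state_dagger.intro smc.intro smc_state_dagger_axioms.intro) blast+
  have unique: "d' f = induced_dagger f"
    if "compat_dagger C mu d' \<and> (\<forall>A. \<forall>\<psi> \<in> Hom C (Unit C) A. d' \<psi> = s \<psi>)" and "f \<in> Hom C A B"
    for d' A B f
    using dagger_eq_induced_dagger[of d' f A B] that unfolding compat_dagger_def dagger_compact_def
    by blast
  show ?case
    using compat_dagger_induced_dagger[OF assms(2) 2] induced_dagger_state unique by blast
qed

end
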